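(* Let $N\geq1$, let $\mathbb{A}$ be a real antisymmetric $N\times N$ matrix, let $\gamma_1,\dots,\gamma_N\geq 0$ and $v_1,\dots,v_N\in\{-1,+1\}$, and let $\mathbb{L}=\mathbb{A}+\mathbb{D}$ with $\mathbb{D}=\mathrm{diag}(2\gamma_1v_1,\dots,2\gamma_Nv_N)$. Let $\mathfrak{V}=\{j: v_j=+1\}$ and $L_0=2\sum_{j\in\mathfrak{V}}\gamma_j$. Let $\lambda_1,\dots,\lambda_N$ be the eigenvalues of $\mathbb{L}$ (with multiplicity), ordered so that $\mathrm{Re}\,\lambda_1\geq\mathrm{Re}\,\lambda_2\geq\cdots\geq\mathrm{Re}\,\lambda_N$, and for $0\leq n\leq N$ set $\Delta_n=L_0-\sum_{k=1}^n\mathrm{Re}\,\lambda_k$. Then: (i) if $\mathfrak{V}\neq\emptyset$, $$\max\Big\{0,\;2\Big(\sum_{j\in\mathfrak{V}}\gamma_j-n\max_{j\in\mathfrak{V}}\gamma_j\Big)\Big\}\leq\Delta_n\leq 2\Big(\sum_{j\in\mathfrak{V}}\gamma_j+n\max_{1\le j\le N}\gamma_j\Big);$$ (ii) if $\mathfrak{V}=\emptyset$, $$2n\min_{1\le j\le N}\gamma_j\leq\Delta_n\leq 2n\max_{1\le j\le N}\gamma_j.$$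
   Context: $\mathbb{L}$ is the single-particle matrix of a fermion-number-conserving Lindbladian $\mathcal{L}=\sum_{ij}f_i^\dagger\mathbb{L}_{ij}f_j-L_0$, and $\Delta_n$ is the spectral gap (slowest decay rate) in the sector with $n$ adjoint fermions; $\mathfrak{V}$ is the set of sites with interlayer gauge flips. *)

theory Defs
  imports Jordan_Normal_Form.Char_Poly
begin

text \<open>Indices are 0-based: sites j range over {0..<N}.\<close>

definition diagD :: "nat \<Rightarrow> (nat \<Rightarrow> real) \<Rightarrow> (nat \<Rightarrow> real) \<Rightarrow> real mat" where
  "diagD N \<gamma> v = mat N N (\<lambda>(i,j). if i = j then 2 * \<gamma> i * v i else 0)"

definition Lmat :: "nat \<Rightarrow> real mat \<Rightarrow> (nat \<Rightarrow> real) \<Rightarrow> (nat \<Rightarrow> real) \<Rightarrow> real mat" where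
  "Lmat N A \<gamma> v = A + diagD N \<gamma> v"

definition flipset :: "nat \<Rightarrow> (nat \<Rightarrow> real) \<Rightarrow> nat set" where
  "flipset N v = {j. j < N \<and> v j = 1}"

definition L0 :: "nat \<Rightarrow> (nat \<Rightarrow> real) \<Rightarrow> (nat \<Rightarrow> real) \<Rightarrow> real" where
  "L0 N \<gamma> v = 2 * (\<Sum>j\<in>flipset N v. \<gamma> j)"

text \<open>Eigenvalues with multiplicity: a list whose linear factors multiply to the
  characteristic polynomial of L (viewed as a complex matrix).\<close>
definition eigenvalue_list :: "real mat \<Rightarrow> complex list \<Rightarrow> bool" where
  "eigenvalue_list M ls \<longleftrightarrow>
     char_poly (map_mat complex_of_real M) = (\<Prod>a\<leftarrow>ls. [:- a, 1:])"

definition gap :: "nat \<Rightarrow> (nat \<Rightarrow> real) \<Rightarrow> (nat \<Rightarrow> real) \<Rightarrow> complex list \<Rightarrow> nat \<Rightarrow> real" where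
  "gap N \<gamma> v ls n = L0 N \<gamma> v - (\<Sum>k<n. Re (ls ! k))"

end

theory Submission
  imports Defs "Jordan_Normal_Form.Schur_Decomposition"
begin

(* Since A is real antisymmetric, the Hermitian part of L is the diagonal matrix D, so
  Re (x\<^sup>H L x) = \<Sum>\<^sub>j d\<^sub>j |x\<^sub>j|\<^sup>2 with d\<^sub>j = 2 \<gamma>\<^sub>j v\<^sub>j. At an eigenvector this places every Re \<lambda>
  between min d and max d, which gives all bounds except \<Delta>\<^sub>n \<ge> 0. That one is a Ky Fan type
  estimate: if Re (x\<^sup>H M x) \<le> Re (x\<^sup>H G x) for all x and G is positive semidefinite, then the real
  parts of any n eigenvalues of M, counted with multiplicity, sum to at most tr G. Conjugating by
  a unitary matrix whose first column is an eigenvector for \<lambda>\<^sub>1 turns the first column of M into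
  \<lambda>\<^sub>1 e\<^sub>0, whence Re \<lambda>\<^sub>1 \<le> Re G\<^sub>0\<^sub>0, and one recurses on the trailing blocks, the trace being
  unitarily invariant. Taking G = D\<^sub>+, whose trace is L\<^sub>0, gives Re \<lambda>\<^sub>1 + ... + Re \<lambda>\<^sub>n \<le> L\<^sub>0. *)

definition qform :: "'a :: conjugatable_ring mat \<Rightarrow> 'a vec \<Rightarrow> 'a" where
  "qform M x = (M *\<^sub>v x) \<bullet>c x"

definition mat_trace :: "'a :: comm_ring mat \<Rightarrow> 'a" where
  "mat_trace M = (\<Sum>i<dim_row M. M $$ (i, i))"

lemma dim_mat_adjoint [simp]:
  "dim_row (mat_adjoint A) = dim_col A" "dim_col (mat_adjoint A) = dim_row A"
  by (simp_all add: mat_adjoint_def)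

lemma mat_adjoint_carrier [simp]: "A \<in> carrier_mat n m \<Longrightarrow> mat_adjoint A \<in> carrier_mat m n"
  by auto

lemma mat_adjoint_index [simp]:
  "i < dim_col A \<Longrightarrow> j < dim_row A \<Longrightarrow> mat_adjoint A $$ (i, j) = conjugate (A $$ (j, i))"
  by (simp add: mat_adjoint_def mat_of_rows_index)

lemma mat_adjoint_cscalar_prod:
  fixes A :: "'a :: conjugatable_field mat"
  assumes A: "A \<in> carrier_mat n m" and u: "u \<in> carrier_vec n" and y: "y \<in> carrier_vec m"
  shows "(mat_adjoint A *\<^sub>v u) \<bullet>c y = u \<bullet>c (A *\<^sub>v y)"
proof -
  have "(mat_adjoint A *\<^sub>v u) \<bullet>c y = (\<Sum>i<m. \<Sum>j<n. conjugate (A $$ (j, i)) * u $ j * conjugate (y $ i))"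
    using A u y by (simp add: scalar_prod_def atLeast0LessThan row_def sum_distrib_right)
  also have "\<dots> = (\<Sum>j<n. \<Sum>i<m. u $ j * conjugate (A $$ (j, i) * y $ i))"
    by (subst sum.swap) (simp add: conjugate_dist_mul mult_ac)
  also have "\<dots> = u \<bullet>c (A *\<^sub>v y)"
    using A u y by (simp add: scalar_prod_def atLeast0LessThan row_def sum_distrib_left sum_conjugate)
  finally show ?thesis .
qed

lemma qform_unitary_conj:
  fixes M W :: "'a :: conjugatable_field mat"
  assumes W: "W \<in> carrier_mat m m" and M: "M \<in> carrier_mat m m" and y: "y \<in> carrier_vec m"
  shows "qform (mat_adjoint W * M * W) y = qform M (W *\<^sub>v y)"
proof -
  have "(mat_adjoint W * M * W) *\<^sub>v y = (mat_adjoint W * M) *\<^sub>v (W *\<^sub>v y)"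
    using W M y by (intro assoc_mult_mat_vec[of _ m m]) auto
  also have "\<dots> = mat_adjoint W *\<^sub>v (M *\<^sub>v (W *\<^sub>v y))"
    using W M y by (intro assoc_mult_mat_vec[of _ m m]) auto
  finally show ?thesis
    unfolding qform_def using W M y by (simp add: mat_adjoint_cscalar_prod)
qed

lemma mat_trace_mult_comm:
  fixes A B :: "'a :: comm_ring mat"
  assumes "A \<in> carrier_mat n m" and "B \<in> carrier_mat m n"
  shows "mat_trace (A * B) = mat_trace (B * A)"
  using assms unfolding mat_trace_def
  by (simp add: scalar_prod_def atLeast0LessThan row_def col_def)
     (subst sum.swap, simp add: mult.commute)

lemma mat_trace_unitary_conj:
  fixes G W :: "'a :: conjugatable_field mat"
  assumes W: "W \<in> carrier_mat m m" and G: "G \<in> carrier_mat m m" and "W * mat_adjoint W = 1\<^sub>m m"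
  shows "mat_trace (mat_adjoint W * G * W) = mat_trace G"
proof -
  have "mat_trace (mat_adjoint W * G * W) = mat_trace (W * (mat_adjoint W * G))"
    using W G by (intro mat_trace_mult_comm[of _ m m]) auto
  also have "W * (mat_adjoint W * G) = G"
    using W G assms(3) by (simp add: assoc_mult_mat[symmetric, of _ m m _ m _ m])
  finally show ?thesis .
qed

lemma qform_unit_vec:
  fixes M :: "complex mat"
  assumes "M \<in> carrier_mat m m" and "i < m"
  shows "qform M (unit_vec m i) = M $$ (i, i)"
proof -
  have "conjugate (unit_vec m i) = (unit_vec m i :: complex vec)"
    by (auto simp: unit_vec_def)
  then show ?thesis
    using assms by (simp add: qform_def)
qed

lemma Re_mat_trace_nonneg:
  fixes G :: "complex mat"
  assumes G: "G \<in> carrier_mat m m" and psd: "\<And>x. x \<in> carrier_vec m \<Longrightarrow> 0 \<le> Re (qform G x)"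
  shows "0 \<le> Re (mat_trace G)"
proof -
  have "0 \<le> Re (G $$ (i, i))" if "i < m" for i
    using psd[OF unit_vec_carrier] qform_unit_vec[OF G that] by metis
  then show ?thesis
    using G by (auto simp: mat_trace_def intro: sum_nonneg)
qed

definition tail_block :: "'a mat \<Rightarrow> 'a mat" where
  "tail_block M = mat (dim_row M - 1) (dim_col M - 1) (\<lambda>(i, j). M $$ (Suc i, Suc j))"

lemma tail_block_carrier [simp]: "M \<in> carrier_mat (Suc m) (Suc m) \<Longrightarrow> tail_block M \<in> carrier_mat m m"
  by (simp add: tail_block_def)

lemma mat_trace_tail_block:
  assumes "M \<in> carrier_mat (Suc m) (Suc m)"
  shows "mat_trace M = M $$ (0, 0) + mat_trace (tail_block M)"
  using assms by (simp add: mat_trace_def tail_block_def sum.lessThan_Suc_shift del: sum.lessThan_Suc)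

lemma qform_vCons_0:
  fixes M :: "'a :: conjugatable_ring mat"
  assumes M: "M \<in> carrier_mat (Suc m) (Suc m)" and y: "y \<in> carrier_vec m"
  shows "qform M (vCons 0 y) = qform (tail_block M) y"
proof -
  have "M *\<^sub>v vCons 0 y = vCons ((M *\<^sub>v vCons 0 y) $ 0) (tail_block M *\<^sub>v y)"
  proof (rule eq_vecI)
    fix i assume "i < dim_vec (vCons ((M *\<^sub>v vCons 0 y) $ 0) (tail_block M *\<^sub>v y))"
    then show "(M *\<^sub>v vCons 0 y) $ i = vCons ((M *\<^sub>v vCons 0 y) $ 0) (tail_block M *\<^sub>v y) $ i"
      using M y by (cases i) (auto simp: tail_block_def scalar_prod_def row_def sum.lessThan_Suc_shift
          atLeast0LessThan simp del: sum.lessThan_Suc)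
  qed (use M y in \<open>auto simp: tail_block_def\<close>)
  then obtain c where "M *\<^sub>v vCons 0 y = vCons c (tail_block M *\<^sub>v y)"
    by blast
  then show ?thesis
    unfolding qform_def by simp
qed

lemma char_poly_first_col_eigen:
  fixes M :: "'a :: conjugatable_ordered_field mat"
  assumes M: "M \<in> carrier_mat (Suc m) (Suc m)" and col0: "col M 0 = e \<cdot>\<^sub>v unit_vec (Suc m) 0"
  shows "char_poly M = [:-e, 1:] * char_poly (tail_block M)"
proof -
  define A1 where "A1 = mat 1 1 (\<lambda>_. e)"
  define A2 where "A2 = mat 1 m (\<lambda>(i, j). M $$ (0, Suc j))"
  have A1: "A1 \<in> carrier_mat 1 1" and A2: "A2 \<in> carrier_mat 1 m"
    by (auto simp: A1_def A2_def)
  have entry: "M $$ (i, 0) = (if i = 0 then e else 0)" if "i < Suc m" for i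
    using arg_cong[OF col0, of "\<lambda>v. v $ i"] M that by auto
  have "M = four_block_mat A1 A2 (0\<^sub>m m 1) (tail_block M)"
    by (rule eq_matI) (use M entry in \<open>auto simp: A1_def A2_def tail_block_def\<close>)
  then have "char_poly M = char_poly A1 * char_poly (tail_block M)"
    using char_poly_four_block_zeros_col[OF A1 A2 tail_block_carrier[OF M]] by simp
  moreover have "char_poly A1 = [:-e, 1:]"
    by (simp add: A1_def char_poly_defs det_def sign_def)
  ultimately show ?thesis by simp
qed

lemma corthogonal_basis_extending:
  fixes v :: "'a :: conjugatable_ordered_field vec"
  assumes v: "v \<in> carrier_vec m" and v0: "v \<noteq> 0\<^sub>v m"
  obtains ws where "set ws \<subseteq> carrier_vec m" "corthogonal ws" "length ws = m" "hd ws = v"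
proof -
  interpret cof_vec_space m "TYPE('a)" .
  define b where "b = basis_completion v"
  from basis_completion[OF v v0, folded b_def]
  have "distinct b" "\<not> lin_dep (set b)" "set b \<subseteq> carrier_vec m" "hd b = v" "length b = m"
    by auto
  moreover have "m \<noteq> 0"
    using v v0 by auto
  ultimately obtain vs where "b = v # vs"
    by (cases b) auto
  with gram_schmidt_result[OF \<open>set b \<subseteq> _\<close> \<open>distinct b\<close> \<open>\<not> lin_dep _\<close> refl] \<open>length b = m\<close> v
  show ?thesis
    by (intro that[of "gram_schmidt m b"]) auto
qed

lemma cscalar_prod_normalized:
  fixes w :: "complex vec"
  assumes "w \<in> carrier_vec m" and "w \<noteq> 0\<^sub>v m"
  shows "(complex_of_real (1 / sqrt (Re (w \<bullet>c w))))\<^sup>2 * (w \<bullet>c w) = 1"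
proof -
  define r where "r = Re (w \<bullet>c w)"
  have "0 < w \<bullet>c w"
    using assms by simp
  then have ww: "w \<bullet>c w = complex_of_real r" and "0 < r"
    by (simp_all add: r_def less_complex_def complex_eq_iff)
  have "(1 / sqrt r)\<^sup>2 * r = 1"
    using \<open>0 < r\<close> by (simp add: power_divide)
  then show ?thesis
    unfolding ww Re_complex_of_real by (metis of_real_1 of_real_mult of_real_power)
qed

lemma unitary_of_orthonormal_cols:
  fixes W :: "'a :: conjugatable_field mat"
  assumes W: "W \<in> carrier_mat m m"
    and orth: "\<And>i j. i < m \<Longrightarrow> j < m \<Longrightarrow> col W j \<bullet>c col W i = (if i = j then 1 else 0)"
  shows "mat_adjoint W * W = 1\<^sub>m m" and "W * mat_adjoint W = 1\<^sub>m m"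
proof -
  show WW: "mat_adjoint W * W = 1\<^sub>m m"
  proof (rule eq_matI)
    fix i j assume "i < dim_row (1\<^sub>m m)" "j < dim_col (1\<^sub>m m)"
    then show "(mat_adjoint W * W) $$ (i, j) = 1\<^sub>m m $$ (i, j)"
      using W orth[of i j] conjugate_vec_sprod_comm[of "col W j" m "col W i"]
      by (auto simp: mat_adjoint_def)
  qed (use W in auto)
  show "W * mat_adjoint W = 1\<^sub>m m"
    by (rule mat_mult_left_right_inverse[OF mat_adjoint_carrier[OF W] W WW])
qed

lemma unitary_completion:
  fixes v :: "complex vec"
  assumes v: "v \<in> carrier_vec m" and v0: "v \<noteq> 0\<^sub>v m"
  obtains W c where "W \<in> carrier_mat m m" "mat_adjoint W * W = 1\<^sub>m m" "W * mat_adjoint W = 1\<^sub>m m"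
    "col W 0 = c \<cdot>\<^sub>v v"
proof -
  obtain ws where ws: "set ws \<subseteq> carrier_vec m" "corthogonal ws" "length ws = m" "hd ws = v"
    using corthogonal_basis_extending[OF v v0] by blast
  have wsc: "ws ! k \<in> carrier_vec m" if "k < m" for k
    using ws that by auto
  define s where "s w = complex_of_real (1 / sqrt (Re (w \<bullet>c w)))" for w :: "complex vec"
  define W where "W = mat_of_cols m (map (\<lambda>w. s w \<cdot>\<^sub>v w) ws)"
  have W: "W \<in> carrier_mat m m"
    unfolding W_def using mat_of_cols_carrier(1) ws(3) by (metis length_map)
  have colW: "col W j = s (ws ! j) \<cdot>\<^sub>v ws ! j" if "j < m" for j
    using ws that unfolding W_def by (subst col_mat_of_cols) auto
  have "col W j \<bullet>c col W i = (if i = j then 1 else 0)" if "i < m" "j < m" for i j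
  proof -
    have "col W j \<bullet>c col W i = s (ws ! j) * conjugate (s (ws ! i)) * (ws ! j \<bullet>c ws ! i)"
      using wsc[OF that(1)] wsc[OF that(2)] colW[OF that(1)] colW[OF that(2)]
      by (simp add: conjugate_smult_vec)
    also have "\<dots> = (if i = j then 1 else 0)"
    proof (cases "i = j")
      case True
      have nz: "ws ! j \<bullet>c ws ! j \<noteq> 0"
        using corthogonalD[OF ws(2), of j j] ws(3) that by auto
      then have "ws ! j \<noteq> 0\<^sub>v m"
        using wsc[OF \<open>j < m\<close>] by auto
      then show ?thesis
        using True nz cscalar_prod_normalized[OF wsc[OF \<open>j < m\<close>]] by (simp add: s_def power2_eq_square)
    next
      case False
      then show ?thesis
        using corthogonalD[OF ws(2)] ws(3) that by auto
    qed
    finally show ?thesis .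
  qed
  moreover have "col W 0 = s v \<cdot>\<^sub>v v"
    using colW[of 0] ws(3,4) v v0 by (cases ws) auto
  ultimately show ?thesis
    using that W unitary_of_orthonormal_cols[OF W] by blast
qed

lemma unitary_deflation:
  fixes M :: "complex mat"
  assumes M: "M \<in> carrier_mat m m" and e: "eigenvalue M e"
  obtains W where "W \<in> carrier_mat m m" "mat_adjoint W * W = 1\<^sub>m m" "W * mat_adjoint W = 1\<^sub>m m"
    "col (mat_adjoint W * M * W) 0 = e \<cdot>\<^sub>v unit_vec m 0"
proof -
  obtain x where "eigenvector M x e"
    using find_eigenvector[OF M e] by blast
  then have x: "x \<in> carrier_vec m" "x \<noteq> 0\<^sub>v m" and Mx: "M *\<^sub>v x = e \<cdot>\<^sub>v x"
    using M by (auto simp: eigenvector_def)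
  have m0: "0 < m"
    using x by (cases m) auto
  obtain W c where W: "W \<in> carrier_mat m m" and WW: "mat_adjoint W * W = 1\<^sub>m m"
    and WW': "W * mat_adjoint W = 1\<^sub>m m" and col0: "col W 0 = c \<cdot>\<^sub>v x"
    using unitary_completion[OF x] by blast
  have WH: "mat_adjoint W \<in> carrier_mat m m"
    using W by simp
  have "col (mat_adjoint W * M * W) 0 = (mat_adjoint W * M) *\<^sub>v (c \<cdot>\<^sub>v x)"
    using W M m0 col0 by (subst col_mult2[of _ m m]) auto
  also have "\<dots> = c \<cdot>\<^sub>v (mat_adjoint W *\<^sub>v (M *\<^sub>v x))"
    using WH M x by (simp add: mult_mat_vec[of _ m m])
  also have "\<dots> = e \<cdot>\<^sub>v (mat_adjoint W *\<^sub>v col W 0)"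
    using WH x Mx col0 by (simp add: mult_mat_vec[of _ m m] smult_smult_assoc mult.commute)
  also have "mat_adjoint W *\<^sub>v col W 0 = unit_vec m 0"
    using col_mult2[OF WH W m0] WW m0 by simp
  finally show ?thesis
    using that W WW WW' by blast
qed

lemma length_char_poly_linear_factors:
  assumes "M \<in> carrier_mat m m" and "char_poly M = (\<Prod>a\<leftarrow>es. [:-a, 1:])"
  shows "length es = m"
  using degree_monic_char_poly[OF assms(1)] degree_linear_factors[of uminus es] assms(2) by simp

lemma deflation_step:
  fixes M G :: "complex mat"
  assumes M: "M \<in> carrier_mat (Suc m) (Suc m)" and G: "G \<in> carrier_mat (Suc m) (Suc m)"
    and char_poly: "char_poly M = [:-e, 1:] * p"
    and form_le: "\<And>x. x \<in> carrier_vec (Suc m) \<Longrightarrow> Re (qform M x) \<le> Re (qform G x)"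
    and form_nonneg: "\<And>x. x \<in> carrier_vec (Suc m) \<Longrightarrow> 0 \<le> Re (qform G x)"
  obtains M' G' where "M' \<in> carrier_mat m m" "G' \<in> carrier_mat m m" "char_poly M' = p"
    "\<And>y. y \<in> carrier_vec m \<Longrightarrow> Re (qform M' y) \<le> Re (qform G' y)"
    "\<And>y. y \<in> carrier_vec m \<Longrightarrow> 0 \<le> Re (qform G' y)"
    "Re e + Re (mat_trace G') \<le> Re (mat_trace G)"
proof -
  have "eigenvalue M e"
    using char_poly by (simp add: eigenvalue_root_char_poly[OF M])
  then obtain W where W: "W \<in> carrier_mat (Suc m) (Suc m)" and WW: "mat_adjoint W * W = 1\<^sub>m (Suc m)"
    and WW': "W * mat_adjoint W = 1\<^sub>m (Suc m)"
    and col0: "col (mat_adjoint W * M * W) 0 = e \<cdot>\<^sub>v unit_vec (Suc m) 0"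
    using unitary_deflation[OF M] by blast
  define M1 where "M1 = mat_adjoint W * M * W"
  define G1 where "G1 = mat_adjoint W * G * W"
  have M1: "M1 \<in> carrier_mat (Suc m) (Suc m)" and G1: "G1 \<in> carrier_mat (Suc m) (Suc m)"
    using W M G by (auto simp: M1_def G1_def)
  have "similar_mat M1 M"
    unfolding similar_mat_def similar_mat_wit_def Let_def M1_def
    using W M WW WW' by (intro exI[of _ "mat_adjoint W"] exI[of _ W]) auto
  then have "[:-e, 1:] * char_poly (tail_block M1) = [:-e, 1:] * p"
    using char_poly_first_col_eigen[OF M1] col0 char_poly by (simp only: M1_def char_poly_similar)
  then have "char_poly (tail_block M1) = p"
    by (metis mult_cancel_left pCons_eq_0_iff zero_neq_one)
  moreover have form_le1: "Re (qform M1 y) \<le> Re (qform G1 y)" if "y \<in> carrier_vec (Suc m)" for y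
    using form_le W that unfolding M1_def G1_def
    by (simp add: qform_unitary_conj[OF W M] qform_unitary_conj[OF W G])
  moreover have form_nonneg1: "0 \<le> Re (qform G1 y)" if "y \<in> carrier_vec (Suc m)" for y
    using form_nonneg W that unfolding G1_def by (simp add: qform_unitary_conj[OF W G])
  moreover have "Re e + Re (mat_trace (tail_block G1)) \<le> Re (mat_trace G)"
  proof -
    have "M1 $$ (0, 0) = e"
      using arg_cong[OF col0, of "\<lambda>v. v $ 0"] carrier_matD[OF M1] by (simp add: M1_def)
    then have "Re e \<le> Re (G1 $$ (0, 0))"
      using form_le1[of "unit_vec (Suc m) 0"] M1 G1 by (simp add: qform_unit_vec)
    then show ?thesis
      using mat_trace_tail_block[OF G1] mat_trace_unitary_conj[OF W G WW'] by (simp add: G1_def)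
  qed
  ultimately show ?thesis
    using that[of "tail_block M1" "tail_block G1"] M1 G1 by (simp add: qform_vCons_0[symmetric])
qed

lemma sum_Re_eigenvalues_le_trace:
  fixes M G :: "complex mat"
  assumes "M \<in> carrier_mat m m" and "G \<in> carrier_mat m m"
    and "char_poly M = (\<Prod>a\<leftarrow>es. [:-a, 1:])"
    and "\<And>x. x \<in> carrier_vec m \<Longrightarrow> Re (qform M x) \<le> Re (qform G x)"
    and "\<And>x. x \<in> carrier_vec m \<Longrightarrow> 0 \<le> Re (qform G x)"
    and "n \<le> length es"
  shows "(\<Sum>k<n. Re (es ! k)) \<le> Re (mat_trace G)"
  using assms
proof (induction es arbitrary: m M G n)
  case Nil
  then show ?case
    using Re_mat_trace_nonneg by simp
next
  case (Cons e es)
  show ?case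
  proof (cases n)
    case 0
    then show ?thesis
      using Re_mat_trace_nonneg[OF Cons.prems(2)] Cons.prems(5) by simp
  next
    case (Suc n')
    obtain m' where m': "m = Suc m'"
      using length_char_poly_linear_factors[OF Cons.prems(1,3)] by auto
    obtain M' G' where M': "M' \<in> carrier_mat m' m'" and G': "G' \<in> carrier_mat m' m'"
      and "char_poly M' = (\<Prod>a\<leftarrow>es. [:-a, 1:])"
      and "\<And>y. y \<in> carrier_vec m' \<Longrightarrow> Re (qform M' y) \<le> Re (qform G' y)"
      and "\<And>y. y \<in> carrier_vec m' \<Longrightarrow> 0 \<le> Re (qform G' y)"
      and trace: "Re e + Re (mat_trace G') \<le> Re (mat_trace G)"
      using deflation_step[of M m' G e] Cons.prems(1-5) unfolding m' by auto
    then have "(\<Sum>k<n'. Re (es ! k)) \<le> Re (mat_trace G')"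
      using Cons.IH Cons.prems(6) Suc by simp
    then show ?thesis
      using trace Suc by (simp add: sum.lessThan_Suc_shift del: sum.lessThan_Suc)
  qed
qed

lemma qform_add:
  fixes B C :: "'a :: conjugatable_ring mat"
  assumes "B \<in> carrier_mat n n" "C \<in> carrier_mat n n" "x \<in> carrier_vec n"
  shows "qform (B + C) x = qform B x + qform C x"
  using assms by (simp add: qform_def add_mult_distrib_mat_vec add_scalar_prod_distrib[of _ n])

lemma Re_qform_real_antisym:
  fixes A :: "real mat"
  assumes A: "A \<in> carrier_mat n n" and anti: "transpose_mat A = - A" and x: "x \<in> carrier_vec n"
  shows "Re (qform (map_mat complex_of_real A) x) = 0"
proof -
  define B where "B = map_mat complex_of_real A"
  have B: "B \<in> carrier_mat n n"
    using A by (simp add: B_def)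
  have adjB: "mat_adjoint B = - B"
  proof (rule eq_matI)
    fix i j assume "i < dim_row (- B)" "j < dim_col (- B)"
    then show "mat_adjoint B $$ (i, j) = (- B) $$ (i, j)"
      using arg_cong[OF anti, of "\<lambda>A. A $$ (i, j)"] A by (simp add: B_def)
  qed (use B in auto)
  have "conjugate (qform B x) = x \<bullet>c (B *\<^sub>v x)"
    using B x comm_scalar_prod[of "B *\<^sub>v x" n "conjugate x"] conjugate_conjugate_sprod[of x n "B *\<^sub>v x"]
    by (simp add: qform_def)
  also have "\<dots> = - qform B x"
    using B x by (simp add: qform_def mat_adjoint_cscalar_prod[symmetric, of B n n] adjB)
  finally have "cnj (qform B x) = - qform B x"
    by simp
  then show ?thesis
    unfolding B_def[symmetric] by (simp add: complex_eq_iff)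
qed

lemma cscalar_prod_self:
  fixes x :: "complex vec"
  shows "x \<bullet>c x = complex_of_real (\<Sum>i<dim_vec x. (cmod (x $ i))\<^sup>2)"
  unfolding scalar_prod_def atLeast0LessThan of_real_sum complex_norm_square by simp

lemma mat_diag_mult_vec:
  assumes "x \<in> carrier_vec n"
  shows "mat_diag n f *\<^sub>v x = vec n (\<lambda>i. f i * x $ i)"
proof (rule eq_vecI)
  fix i assume "i < dim_vec (vec n (\<lambda>i. f i * x $ i))"
  then have "i < n" by simp
  have "(\<Sum>j = 0..<n. (if i = j then f j else 0) * x $ j) = (\<Sum>j = 0..<n. if i = j then f j * x $ j else 0)"
    by (intro sum.cong) auto
  then show "(mat_diag n f *\<^sub>v x) $ i = vec n (\<lambda>i. f i * x $ i) $ i"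
    using assms \<open>i < n\<close> by (simp add: mat_diag_def scalar_prod_def row_def)
qed (use assms in \<open>auto simp: mat_diag_def\<close>)

lemma Re_qform_real_diag:
  fixes x :: "complex vec"
  assumes "x \<in> carrier_vec n"
  shows "Re (qform (mat_diag n (\<lambda>i. complex_of_real (d i))) x) = (\<Sum>i<n. d i * (cmod (x $ i))\<^sup>2)"
proof -
  have "qform (mat_diag n (\<lambda>i. complex_of_real (d i))) x
      = (\<Sum>i<n. complex_of_real (d i) * (x $ i * cnj (x $ i)))"
    using assms by (simp add: qform_def mat_diag_mult_vec scalar_prod_def atLeast0LessThan mult.assoc)
  also have "\<dots> = (\<Sum>i<n. complex_of_real (d i * (cmod (x $ i))\<^sup>2))"
    by (simp only: complex_norm_square[symmetric] of_real_mult)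
  finally show ?thesis
    by (simp only: Re_sum Re_complex_of_real)
qed

lemma Re_eigenvalue_bounds:
  fixes M :: "complex mat"
  assumes M: "M \<in> carrier_mat m m"
    and form: "\<And>x. x \<in> carrier_vec m \<Longrightarrow> Re (qform M x) = (\<Sum>i<m. d i * (cmod (x $ i))\<^sup>2)"
    and bounds: "\<And>i. i < m \<Longrightarrow> lo \<le> d i \<and> d i \<le> hi"
    and "eigenvalue M a"
  shows "lo \<le> Re a \<and> Re a \<le> hi"
proof -
  obtain x where "eigenvector M x a"
    using \<open>eigenvalue M a\<close> by (auto simp: eigenvalue_def)
  then have x: "x \<in> carrier_vec m" "x \<noteq> 0\<^sub>v m" and Mx: "M *\<^sub>v x = a \<cdot>\<^sub>v x"
    using M by (auto simp: eigenvector_def)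
  define r where "r = (\<Sum>i<m. (cmod (x $ i))\<^sup>2)"
  have xx: "x \<bullet>c x = complex_of_real r"
    using x cscalar_prod_self[of x] by (simp add: r_def)
  have "0 < r"
    using conjugate_square_greater_0_vec[OF x(1)] x(2) by (simp add: xx less_complex_def)
  have "Re a * r = (\<Sum>i<m. d i * (cmod (x $ i))\<^sup>2)"
    using form[OF x(1)] x(1) Mx xx by (simp add: qform_def)
  moreover have "lo * r \<le> (\<Sum>i<m. d i * (cmod (x $ i))\<^sup>2)" "(\<Sum>i<m. d i * (cmod (x $ i))\<^sup>2) \<le> hi * r"
    unfolding r_def sum_distrib_left using bounds by (auto intro!: sum_mono mult_right_mono)
  ultimately have "lo * r \<le> Re a * r" "Re a * r \<le> hi * r"
    by linarith+
  then show ?thesis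
    using \<open>0 < r\<close> by simp
qed

lemma Re_qform_Lmat:
  assumes A: "A \<in> carrier_mat N N" and anti: "transpose_mat A = - A" and x: "x \<in> carrier_vec N"
  shows "Re (qform (map_mat complex_of_real (Lmat N A \<gamma> v)) x) = (\<Sum>i<N. 2 * \<gamma> i * v i * (cmod (x $ i))\<^sup>2)"
proof -
  have "map_mat complex_of_real (Lmat N A \<gamma> v)
      = map_mat complex_of_real A + mat_diag N (\<lambda>i. complex_of_real (2 * \<gamma> i * v i))"
    using A by (intro eq_matI) (auto simp: Lmat_def diagD_def mat_diag_def)
  then show ?thesis
    using A x Re_qform_real_antisym[OF A anti x] Re_qform_real_diag[OF x, of "\<lambda>i. 2 * \<gamma> i * v i"]
    by (simp add: qform_add[of _ N])
qed

lemma Lmat_carrier: "A \<in> carrier_mat N N \<Longrightarrow> Lmat N A \<gamma> v \<in> carrier_mat N N"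
  by (simp add: Lmat_def diagD_def)

lemma eigenvalue_list_length:
  assumes "L \<in> carrier_mat N N" and "eigenvalue_list L ls"
  shows "length ls = N"
  using assms length_char_poly_linear_factors[of "map_mat complex_of_real L" N ls]
  by (simp add: eigenvalue_list_def)

lemma eigenvalue_list_eigenvalue:
  assumes "L \<in> carrier_mat N N" and "eigenvalue_list L ls" and "a \<in> set ls"
  shows "eigenvalue (map_mat complex_of_real L) a"
  using assms by (simp add: eigenvalue_list_def eigenvalue_root_char_poly poly_prod_list)

lemma sum_Re_eigenvalues_Lmat_bounds:
  assumes A: "A \<in> carrier_mat N N" and anti: "transpose_mat A = - A"
    and ls: "eigenvalue_list (Lmat N A \<gamma> v) ls" and "n \<le> N"
    and bounds: "\<And>i. i < N \<Longrightarrow> lo \<le> 2 * \<gamma> i * v i \<and> 2 * \<gamma> i * v i \<le> hi"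
  shows "real n * lo \<le> (\<Sum>k<n. Re (ls ! k)) \<and> (\<Sum>k<n. Re (ls ! k)) \<le> real n * hi"
proof -
  note L = Lmat_carrier[OF A, of \<gamma> v]
  have "lo \<le> Re (ls ! k) \<and> Re (ls ! k) \<le> hi" if "k < n" for k
    using Re_eigenvalue_bounds[OF _ Re_qform_Lmat[OF A anti] bounds eigenvalue_list_eigenvalue[OF L ls]]
      eigenvalue_list_length[OF L ls] that \<open>n \<le> N\<close> L by simp
  then show ?thesis
    using sum_bounded_below[of "{..<n}" lo "\<lambda>k. Re (ls ! k)"]
      sum_bounded_above[of "{..<n}" "\<lambda>k. Re (ls ! k)" hi] by auto
qed

lemma sum_Re_eigenvalues_Lmat_le_L0:
  assumes A: "A \<in> carrier_mat N N" and anti: "transpose_mat A = - A"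
    and \<gamma>: "\<forall>j<N. \<gamma> j \<ge> 0" and v: "\<forall>j<N. v j = -1 \<or> v j = 1"
    and ls: "eigenvalue_list (Lmat N A \<gamma> v) ls" and "n \<le> N"
  shows "(\<Sum>k<n. Re (ls ! k)) \<le> L0 N \<gamma> v"
proof -
  define G where "G = mat_diag N (\<lambda>i. complex_of_real (max (2 * \<gamma> i * v i) 0))"
  note L = Lmat_carrier[OF A, of \<gamma> v]
  have "max (2 * \<gamma> i * v i) 0 = (if i \<in> flipset N v then 2 * \<gamma> i else 0)" if "i < N" for i
    using \<gamma> v that by (auto simp: flipset_def)
  then have "Re (mat_trace G) = L0 N \<gamma> v"
    by (simp add: G_def mat_trace_def mat_diag_def L0_def sum.If_cases sum_distrib_left flipset_def
        lessThan_def Collect_conj_eq[symmetric])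
  moreover have "(\<Sum>k<n. Re (ls ! k)) \<le> Re (mat_trace G)"
  proof (rule sum_Re_eigenvalues_le_trace[of _ N])
    fix x :: "complex vec" assume x: "x \<in> carrier_vec N"
    show "Re (qform (map_mat complex_of_real (Lmat N A \<gamma> v)) x) \<le> Re (qform G x)"
      unfolding Re_qform_Lmat[OF A anti x] G_def Re_qform_real_diag[OF x]
      by (intro sum_mono mult_right_mono) auto
    show "0 \<le> Re (qform G x)"
      unfolding G_def Re_qform_real_diag[OF x] by (intro sum_nonneg) auto
  qed (use L ls \<open>n \<le> N\<close> eigenvalue_list_length[OF L ls] in \<open>auto simp: G_def eigenvalue_list_def\<close>)
  ultimately show ?thesis
    by simp
qed

lemma site_rate_ge_neg_Max:
  fixes N i :: nat and \<gamma> v :: "nat \<Rightarrow> real"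
  assumes "\<forall>j<N. \<gamma> j \<ge> 0" and "\<forall>j<N. v j = -1 \<or> v j = 1" and "i < N"
  shows "- 2 * Max (\<gamma> ` {..<N}) \<le> 2 * \<gamma> i * v i"
proof -
  have "\<gamma> i \<le> Max (\<gamma> ` {..<N})"
    using \<open>i < N\<close> by (intro Max_ge finite_imageI) auto
  moreover have "0 \<le> \<gamma> i" "v i = -1 \<or> v i = 1"
    using assms by auto
  ultimately show ?thesis
    by auto
qed

lemma site_rate_le_Max_flipset:
  fixes \<gamma> v :: "nat \<Rightarrow> real"
  assumes "\<forall>j<N. \<gamma> j \<ge> 0" and "\<forall>j<N. v j = -1 \<or> v j = 1" and "i < N" and "flipset N v \<noteq> {}"
  shows "2 * \<gamma> i * v i \<le> 2 * Max (\<gamma> ` flipset N v)"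
proof -
  have fin: "finite (flipset N v)"
    by (simp add: flipset_def)
  obtain j where j: "j \<in> flipset N v"
    using assms(4) by blast
  have "\<gamma> j \<le> Max (\<gamma> ` flipset N v)"
    using fin j by (intro Max_ge finite_imageI) auto
  moreover have "0 \<le> \<gamma> j"
    using j assms(1) by (auto simp: flipset_def)
  moreover have "\<gamma> i \<le> Max (\<gamma> ` flipset N v)" if "v i = 1"
    using that fin \<open>i < N\<close> by (intro Max_ge finite_imageI) (auto simp: flipset_def)
  moreover have "0 \<le> \<gamma> i" "v i = -1 \<or> v i = 1"
    using assms by auto
  ultimately show ?thesis
    by auto
qed

lemma site_rate_le_neg_Min:
  fixes N i :: nat and \<gamma> v :: "nat \<Rightarrow> real"
  assumes "\<forall>j<N. v j = -1 \<or> v j = 1" and "i < N" and "flipset N v = {}"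
  shows "2 * \<gamma> i * v i \<le> - 2 * Min (\<gamma> ` {..<N})"
proof -
  have "v i = -1"
    using assms by (auto simp: flipset_def)
  moreover have "Min (\<gamma> ` {..<N}) \<le> \<gamma> i"
    using \<open>i < N\<close> by (intro Min_le finite_imageI) auto
  ultimately show ?thesis
    by simp
qed

theorem mainTheorem2:
  fixes N n :: nat and A :: "real mat" and \<gamma> v :: "nat \<Rightarrow> real" and ls :: "complex list"
  assumes "N \<ge> 1"
    and "A \<in> carrier_mat N N"
    and "transpose_mat A = - A"
    and "\<forall>j<N. \<gamma> j \<ge> 0"
    and "\<forall>j<N. v j = -1 \<or> v j = 1"
    and "eigenvalue_list (Lmat N A \<gamma> v) ls"
    and "sorted_wrt (\<lambda>a b. Re a \<ge> Re b) ls"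
    and "n \<le> N"
  shows "(flipset N v \<noteq> {} \<longrightarrow>
            max 0 (2 * ((\<Sum>j\<in>flipset N v. \<gamma> j) - real n * Max (\<gamma> ` flipset N v)))
              \<le> gap N \<gamma> v ls n
          \<and> gap N \<gamma> v ls n
              \<le> 2 * ((\<Sum>j\<in>flipset N v. \<gamma> j) + real n * Max (\<gamma> ` {..<N})))
       \<and> (flipset N v = {} \<longrightarrow>
            2 * real n * Min (\<gamma> ` {..<N}) \<le> gap N \<gamma> v ls n
          \<and> gap N \<gamma> v ls n \<le> 2 * real n * Max (\<gamma> ` {..<N}))"
proof -
  let ?S = "\<Sum>k<n. Re (ls ! k)"
  note bounds = sum_Re_eigenvalues_Lmat_bounds[OF assms(2,3,6,8)]
  have gap: "gap N \<gamma> v ls n = 2 * (\<Sum>j\<in>flipset N v. \<gamma> j) - ?S"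
    by (simp add: gap_def L0_def)
  have "?S \<le> L0 N \<gamma> v"
    using sum_Re_eigenvalues_Lmat_le_L0[OF assms(2-6,8)] .
  show ?thesis
  proof (intro conjI impI)
    assume "flipset N v \<noteq> {}"
    then have "real n * (- 2 * Max (\<gamma> ` {..<N})) \<le> ?S \<and> ?S \<le> real n * (2 * Max (\<gamma> ` flipset N v))"
      using bounds site_rate_ge_neg_Max[OF assms(4,5)] site_rate_le_Max_flipset[OF assms(4,5)] by blast
    then show "max 0 (2 * ((\<Sum>j\<in>flipset N v. \<gamma> j) - real n * Max (\<gamma> ` flipset N v))) \<le> gap N \<gamma> v ls n"
      and "gap N \<gamma> v ls n \<le> 2 * ((\<Sum>j\<in>flipset N v. \<gamma> j) + real n * Max (\<gamma> ` {..<N}))"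
      using \<open>?S \<le> L0 N \<gamma> v\<close> by (auto simp: gap L0_def algebra_simps)
  next
    assume "flipset N v = {}"
    then have "real n * (- 2 * Max (\<gamma> ` {..<N})) \<le> ?S \<and> ?S \<le> real n * (- 2 * Min (\<gamma> ` {..<N}))"
      using bounds site_rate_ge_neg_Max[OF assms(4,5)] site_rate_le_neg_Min[OF assms(5)] by blast
    then show "2 * real n * Min (\<gamma> ` {..<N}) \<le> gap N \<gamma> v ls n"
      and "gap N \<gamma> v ls n \<le> 2 * real n * Max (\<gamma> ` {..<N})"
      using \<open>flipset N v = {}\<close> by (auto simp: gap)
  qed
qed

end
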